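(* Under the standing assumptions, suppose in addition that $g$ is e-convex. Then the following are equivalent: (i) strong duality holds for $(P)-(D^F)$; (ii) strong duality holds for $(P)-(\bar D^F)$ and $\Omega\cap B=K\cap B$.
   Context: Let $X$ be a nontrivial separated locally convex space with topological dual $X^*$, endowed with the topology $\sigma(X,X^* )$; $\langle x,x^*\rangle$ is the value of $x^*\in X^*$ at $x\in X$. Put $W:=X^*\times X^*\times\mathbb{R}$, $\mathbb{R}_{++}:=]0,+\infty[$ and $Z:=X^*\times X^*\times\mathbb{R}_{++}$. For $y^*\in X^*$, $\alpha\in\mathbb{R}$, let $H^-_{y^*,\alpha}:=\{x\in X:\langle x,y^*\rangle<\alpha\}$. The coupling function $c:X\times W\to\overline{\mathbb{R}}$ is $c(x,(x^*,y^*,\alpha)):=\langle x,x^*\rangle$ if $\langle x,y^*\rangle<\alpha$ and $:=+\infty$ otherwise. For $h:X\to\overline{\mathbb{R}}$ its $c$-conjugate is $h^c:W\to\overline{\mathbb{R}}$, $h^c(w):=\sup_{x\in X}\{c(x,w)-h(x)\}$, with the convention $(+\infty)+(-\infty)=(-\infty)+(+\infty)=(+\infty)-(+\infty)=(-\infty)-(-\infty)=-\infty$ (so for proper $h$, $h^c(x^*,y^*,\alpha)=h^*(x^* )$ if $\operatorname{dom}h\subseteq H^-_{y^*,\alpha}$ and $+\infty$ otherwise). Epigraphs of functions on $W$ are subsets of $W\times\mathbb{R}$. $\delta_A$ is the indicator function of $A$. For $E\subseteq W\times\mathbb{R}$ and $e\in W\times\mathbb{R}$, $E-e:=\{z-e:z\in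 E\}$. A set $C\subseteq X\times\mathbb{R}$ is e-convex if for every point $p\notin C$ there is a continuous linear functional $\ell$ on $X\times\mathbb{R}$ with $\ell(q-p)<0$ for all $q\in C$; a function is e-convex if its epigraph is e-convex. Standing assumptions: $f,g:X\to\overline{\mathbb{R}}$ proper convex with $\operatorname{dom}f\subseteq\operatorname{dom}g$, $A\subseteq X$ nonempty, convention $(+\infty)-(+\infty)=+\infty$ in $f-g$; $v(P)=\inf_{x\in X}\{f(x)-g(x)+\delta_A(x)\}$. With $\varphi(u^*,v^*,\gamma;x^*,y^*,\alpha):=g^c(u^*,v^*,\gamma)-f^c(u^*-x^*,-y^*,\alpha)-\delta_A^c(x^*,y^*,\alpha)$: $v(D^F):=\sup_{(x^*,y^*,\alpha)\in Z}\inf_{(u^*,v^*,\gamma)\in\operatorname{dom}g^c}\varphi$ and $v(\bar D^F):=\inf_{(u^*,v^*,\gamma)\in\operatorname{dom}g^c}\sup_{(x^*,y^*,\alpha)\in Z}\varphi$. Strong duality for $(P)-(D^F)$ means $v(P)=v(D^F)$ and there is $(\bar x^*,\bar y^*,\bar\alpha)\in\operatorname{dom}\delta_A^c$ with $\varphi(u^*,v^*,\gamma;\bar x^*,\bar y^*,\bar\alpha)\ge v(D^F)$ for all $(u^*,v^*,\gamma)\in\operatorname{dom}g^c$. Strong duality for $(P)-(\bar D^F)$ means $v(P)=v(\bar D^F)$ and for every $(u^*,v^*,\gamma)\in\operatorname{dom}g^c$ there is $(x^*,y^*,\alpha)\in\operatorname{dom}\delta_A^c$ with $\varphi(u^*,v^*,\gamma;x^*,y^*,\alpha)\ge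 v(\bar D^F)$. Sets: $B:=\{0\}\times\{0\}\times\mathbb{R}_{++}\times\mathbb{R}\subseteq W\times\mathbb{R}$; $\Omega:=\bigcup_{(x^*,y^*,\alpha)\in\operatorname{dom}\delta_A^c}\ \bigcap_{(u^*,v^*,\gamma)\in\operatorname{dom}g^c}\Big[\operatorname{epi}\big(f-c(\cdot,(-x^*,-y^*,\alpha))\big)^c-\big(u^*,0,0,g^c(u^*,v^*,\gamma)-\delta_A^c(x^*,y^*,\alpha)\big)\Big]$, $K:=\bigcap_{(u^*,v^*,\gamma)\in\operatorname{dom}g^c}\ \bigcup_{(x^*,y^*,\alpha)\in\operatorname{dom}\delta_A^c}\Big[\operatorname{epi}\big(f-c(\cdot,(-x^*,-y^*,\alpha))\big)^c-\big(u^*,0,0,g^c(u^*,v^*,\gamma)-\delta_A^c(x^*,y^*,\alpha)\big)\Big]$. *)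

theory Defs
  imports "HOL-Analysis.Analysis"
begin

text \<open>The locally convex space X (with topology sigma(X,X*)) is modelled by a dual pair:
  a real vector space 'x, a real vector space 'y (the dual X*), and a bilinear pairing
  p x y = <x,y> separating points on both sides. W = 'y * 'y * real.\<close>

definition dual_pair :: "('x::real_vector \<Rightarrow> 'y::real_vector \<Rightarrow> real) \<Rightarrow> bool" where
  "dual_pair p \<longleftrightarrow> (\<forall>x. linear (\<lambda>y. p x y)) \<and> (\<forall>y. linear (\<lambda>x. p x y))
     \<and> (\<forall>x. x \<noteq> 0 \<longrightarrow> (\<exists>y. p x y \<noteq> 0)) \<and> (\<forall>y. y \<noteq> 0 \<longrightarrow> (\<exists>x. p x y \<noteq> 0))"

definition minus_lo :: "ereal \<Rightarrow> ereal \<Rightarrow> ereal" where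
  "minus_lo a b = (if (a = \<infinity> \<and> b = \<infinity>) \<or> (a = -\<infinity> \<and> b = -\<infinity>) then -\<infinity> else a - b)"

definition minus_up :: "ereal \<Rightarrow> ereal \<Rightarrow> ereal" where
  "minus_up a b = (if (a = \<infinity> \<and> b = \<infinity>) \<or> (a = -\<infinity> \<and> b = -\<infinity>) then \<infinity> else a - b)"

definition cpl :: "('x::real_vector \<Rightarrow> 'y::real_vector \<Rightarrow> real) \<Rightarrow> 'x \<Rightarrow> 'y \<times> 'y \<times> real \<Rightarrow> ereal" where
  "cpl p x w = (case w of (xs, ys, a) \<Rightarrow> if p x ys < a then ereal (p x xs) else \<infinity>)"

definition cconj :: "('x::real_vector \<Rightarrow> 'y::real_vector \<Rightarrow> real) \<Rightarrow> ('x \<Rightarrow> ereal) \<Rightarrow> 'y \<times> 'y \<times> real \<Rightarrow> ereal" where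
  "cconj p h w = (SUP x. minus_lo (cpl p x w) (h x))"

definition edom :: "('a \<Rightarrow> ereal) \<Rightarrow> 'a set" where
  "edom h = {w. h w < \<infinity>}"

definition epi :: "('a \<Rightarrow> ereal) \<Rightarrow> ('a \<times> real) set" where
  "epi h = {(w, r). h w \<le> ereal r}"

definition ind :: "'a set \<Rightarrow> 'a \<Rightarrow> ereal" where
  "ind A x = (if x \<in> A then 0 else \<infinity>)"

definition proper_convex :: "('x::real_vector \<Rightarrow> ereal) \<Rightarrow> bool" where
  "proper_convex h \<longleftrightarrow> (\<exists>x. h x < \<infinity>) \<and> (\<forall>x. h x > -\<infinity>) \<and> convex (epi h)"

text \<open>e-convexity: continuous linear functionals on X x R (sigma(X,X*) x usual) are
  exactly (x,t) |-> <x,y> + s t with y in X*, s real.\<close>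
definition econvex_set :: "('x::real_vector \<Rightarrow> 'y::real_vector \<Rightarrow> real) \<Rightarrow> ('x \<times> real) set \<Rightarrow> bool" where
  "econvex_set p C \<longleftrightarrow> (\<forall>pt. pt \<notin> C \<longrightarrow>
      (\<exists>y s. \<forall>q\<in>C. p (fst q - fst pt) y + s * (snd q - snd pt) < 0))"

definition econvex_fun :: "('x::real_vector \<Rightarrow> 'y::real_vector \<Rightarrow> real) \<Rightarrow> ('x \<Rightarrow> ereal) \<Rightarrow> bool" where
  "econvex_fun p h \<longleftrightarrow> econvex_set p (epi h)"

definition Zset :: "('y \<times> 'y \<times> real) set" where
  "Zset = {(x, y, a). a > 0}"

definition vP :: "('x \<Rightarrow> ereal) \<Rightarrow> ('x \<Rightarrow> ereal) \<Rightarrow> 'x set \<Rightarrow> ereal" where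
  "vP f g A = (INF x. minus_up (f x) (g x) + ind A x)"

definition phi :: "('x::real_vector \<Rightarrow> 'y::real_vector \<Rightarrow> real) \<Rightarrow> ('x \<Rightarrow> ereal) \<Rightarrow> ('x \<Rightarrow> ereal) \<Rightarrow> 'x set
    \<Rightarrow> 'y \<times> 'y \<times> real \<Rightarrow> 'y \<times> 'y \<times> real \<Rightarrow> ereal" where
  "phi p f g A w z = (case w of (u, v, c) \<Rightarrow> case z of (x, y, a) \<Rightarrow>
     minus_lo (minus_lo (cconj p g (u, v, c)) (cconj p f (u - x, - y, a))) (cconj p (ind A) (x, y, a)))"

definition vDF :: "('x::real_vector \<Rightarrow> 'y::real_vector \<Rightarrow> real) \<Rightarrow> ('x \<Rightarrow> ereal) \<Rightarrow> ('x \<Rightarrow> ereal) \<Rightarrow> 'x set \<Rightarrow> ereal" where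
  "vDF p f g A = (SUP z\<in>Zset. INF w\<in>edom (cconj p g). phi p f g A w z)"

definition vDbarF :: "('x::real_vector \<Rightarrow> 'y::real_vector \<Rightarrow> real) \<Rightarrow> ('x \<Rightarrow> ereal) \<Rightarrow> ('x \<Rightarrow> ereal) \<Rightarrow> 'x set \<Rightarrow> ereal" where
  "vDbarF p f g A = (INF w\<in>edom (cconj p g). SUP z\<in>Zset. phi p f g A w z)"

definition strong_DF :: "('x::real_vector \<Rightarrow> 'y::real_vector \<Rightarrow> real) \<Rightarrow> ('x \<Rightarrow> ereal) \<Rightarrow> ('x \<Rightarrow> ereal) \<Rightarrow> 'x set \<Rightarrow> bool" where
  "strong_DF p f g A \<longleftrightarrow> vP f g A = vDF p f g A \<and>
     (\<exists>z\<in>edom (cconj p (ind A)). \<forall>w\<in>edom (cconj p g). phi p f g A w z \<ge> vDF p f g A)"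

definition strong_DbarF :: "('x::real_vector \<Rightarrow> 'y::real_vector \<Rightarrow> real) \<Rightarrow> ('x \<Rightarrow> ereal) \<Rightarrow> ('x \<Rightarrow> ereal) \<Rightarrow> 'x set \<Rightarrow> bool" where
  "strong_DbarF p f g A \<longleftrightarrow> vP f g A = vDbarF p f g A \<and>
     (\<forall>w\<in>edom (cconj p g). \<exists>z\<in>edom (cconj p (ind A)). phi p f g A w z \<ge> vDbarF p f g A)"

definition Bset :: "(('y::real_vector \<times> 'y \<times> real) \<times> real) set" where
  "Bset = {((x, y, a), r). x = 0 \<and> y = 0 \<and> a > 0}"

text \<open>The translated set
  epi (f - c(., (-x*,-y*,alpha)))^c - (u*, 0, 0, g^c(u*,v*,gamma) - delta_A^c(x*,y*,alpha)).\<close>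
definition Eset :: "('x::real_vector \<Rightarrow> 'y::real_vector \<Rightarrow> real) \<Rightarrow> ('x \<Rightarrow> ereal) \<Rightarrow> ('x \<Rightarrow> ereal) \<Rightarrow> 'x set
    \<Rightarrow> 'y \<times> 'y \<times> real \<Rightarrow> 'y \<times> 'y \<times> real \<Rightarrow> (('y \<times> 'y \<times> real) \<times> real) set" where
  "Eset p f g A w z = (case w of (u, v, c) \<Rightarrow> case z of (x, y, a) \<Rightarrow>
     (\<lambda>q. q - ((u, 0, 0), real_of_ereal (cconj p g (u, v, c) - cconj p (ind A) (x, y, a))))
       ` epi (cconj p (\<lambda>t. minus_up (f t) (cpl p t (- x, - y, a)))))"

definition Omega :: "('x::real_vector \<Rightarrow> 'y::real_vector \<Rightarrow> real) \<Rightarrow> ('x \<Rightarrow> ereal) \<Rightarrow> ('x \<Rightarrow> ereal) \<Rightarrow> 'x set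
    \<Rightarrow> (('y \<times> 'y \<times> real) \<times> real) set" where
  "Omega p f g A = (\<Union>z\<in>edom (cconj p (ind A)). \<Inter>w\<in>edom (cconj p g). Eset p f g A w z)"

definition Kset :: "('x::real_vector \<Rightarrow> 'y::real_vector \<Rightarrow> real) \<Rightarrow> ('x \<Rightarrow> ereal) \<Rightarrow> ('x \<Rightarrow> ereal) \<Rightarrow> 'x set
    \<Rightarrow> (('y \<times> 'y \<times> real) \<times> real) set" where
  "Kset p f g A = (\<Inter>w\<in>edom (cconj p g). \<Union>z\<in>edom (cconj p (ind A)). Eset p f g A w z)"

end

theory Submission
  imports Defs
begin

text \<open>
  For w in dom g^c and z in dom delta_A^c all conjugate values involved are finite, and a
  point ((0,0,beta),r) of B lies in the translated epigraph E(w,z) exactly when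
  phi(w,z) \<ge> -r. Thus Omega \<inter> B describes the levels attained by a single z uniformly in w,
  and K \<inter> B the levels attained by some z for each w. Raising alpha moves any z of
  dom delta_A^c into Z without decreasing phi, and e-convexity of g gives the weak duality
  v(D^F) \<le> v(Dbar^F) \<le> v(P). Hence a solution of (D^F) puts all of K \<inter> B into Omega, while
  conversely the point ((0,0,1), -v(Dbar^F)) of K \<inter> B = Omega \<inter> B yields a solution of (D^F).
\<close>

lemma dual_pair_linear:
  assumes "dual_pair p"
  shows "p t 0 = 0" "p t (- y) = - p t y" "p t (u - x) = p t u - p t x"
    "p (t - s) y = p t y - p s y" "p t (c *\<^sub>R y) = c * p t y"
proof -
  have l1: "linear (\<lambda>y. p t y)" and l2: "linear (\<lambda>x. p x y)"
    using assms unfolding dual_pair_def by auto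
  show "p t 0 = 0" using linear_0[OF l1] by simp
  show "p t (- y) = - p t y" using real_vector.linear_neg[OF l1] by simp
  show "p t (u - x) = p t u - p t x" using real_vector.linear_diff[OF l1] by simp
  show "p (t - s) y = p t y - p s y" using real_vector.linear_diff[OF l2] by simp
  show "p t (c *\<^sub>R y) = c * p t y" using linear_cmul[OF l1] by simp
qed

lemma cpl_Pair: "cpl p t (u, v, c) = (if p t v < c then ereal (p t u) else \<infinity>)"
  by (simp add: cpl_def)

lemma phi_Pair: "phi p f g A (u, v, c) (x, y, a) =
   minus_lo (minus_lo (cconj p g (u, v, c)) (cconj p f (u - x, - y, a))) (cconj p (ind A) (x, y, a))"
  by (simp add: phi_def)

lemma minus_lo_mono: "a \<le> a' \<Longrightarrow> b' \<le> b \<Longrightarrow> minus_lo a b \<le> minus_lo a' b'"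
  by (cases a; cases a'; cases b; cases b') (auto simp: minus_lo_def)

lemma minus_lo_less_PInf: "a < \<infinity> \<Longrightarrow> b \<noteq> -\<infinity> \<Longrightarrow> minus_lo a b < \<infinity>"
  by (cases a; cases b) (auto simp: minus_lo_def)

lemma minus_lo_ereal_right: "minus_lo a (ereal b) = a - ereal b"
  by (simp add: minus_lo_def)

lemma minus_lo_PInf_right: "minus_lo a \<infinity> = -\<infinity>"
  by (cases a) (auto simp: minus_lo_def)

subsection \<open>Elementary properties of c-conjugates\<close>

lemma proper_convex_obtain_finite:
  assumes "proper_convex h"
  obtains t r where "h t = ereal r"
proof -
  from assms obtain t where "h t < \<infinity>" "h t > -\<infinity>" unfolding proper_convex_def by blast
  then show ?thesis using that by (cases "h t") auto
qed

lemma cconj_ge: "h t = ereal r \<Longrightarrow> cpl p t w - ereal r \<le> cconj p h w"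
  unfolding cconj_def by (rule SUP_upper2[of t]) (auto simp: minus_lo_ereal_right)

lemma cconj_neq_MInf:
  assumes "h t = ereal r"
  shows "cconj p h w \<noteq> -\<infinity>"
proof
  assume "cconj p h w = -\<infinity>"
  with cconj_ge[of h t r p w, OF assms] have "cpl p t w - ereal r = -\<infinity>" by simp
  then show False by (cases w) (auto simp: cpl_Pair split: if_splits)
qed

lemma cconj_finite_on_edom:
  assumes "h t = ereal r" and "w \<in> edom (cconj p h)"
  obtains v where "cconj p h w = ereal v"
  using cconj_neq_MInf[of h t r p w, OF assms(1)] assms(2)
  by (cases "cconj p h w") (auto simp: edom_def)

lemma cconj_ind_raise_level:
  assumes "(x, y, a) \<in> edom (cconj p (ind A))" and "a \<le> a'"
  shows "cconj p (ind A) (x, y, a') = cconj p (ind A) (x, y, a)"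
proof -
  have below: "p t y < a" if "t \<in> A" for t
  proof (rule ccontr)
    assume "\<not> p t y < a"
    then have "cpl p t (x, y, a) = \<infinity>" by (simp add: cpl_Pair)
    with cconj_ge[of "ind A" t 0 p "(x, y, a)"] that assms(1) show False
      by (simp add: ind_def edom_def)
  qed
  have "minus_lo (cpl p t (x, y, a')) (ind A t) = minus_lo (cpl p t (x, y, a)) (ind A t)" for t
    using below[of t] assms(2) by (cases "t \<in> A") (auto simp: cpl_Pair ind_def minus_lo_PInf_right)
  then show ?thesis unfolding cconj_def by simp
qed

lemma cconj_antimono_level:
  assumes "a \<le> a'"
  shows "cconj p f (u, y, a') \<le> cconj p f (u, y, a)"
proof -
  have "minus_lo (cpl p t (u, y, a')) (f t) \<le> minus_lo (cpl p t (u, y, a)) (f t)" for t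
    using assms by (cases "f t"; cases "p t y < a"; cases "p t y < a'")
      (auto simp: cpl_Pair minus_lo_def)
  then show ?thesis unfolding cconj_def by (rule SUP_mono')
qed

text \<open>At (u*,0,beta) with beta > 0 the outer coupling imposes no constraint, so only the
  half-space condition <t,-y*> < alpha of the inner coupling survives.\<close>

lemma cconj_minus_cpl:
  assumes "dual_pair p" and "b > 0"
  shows "cconj p (\<lambda>t. minus_up (f t) (cpl p t (- x, - y, a))) (u, 0, b) = cconj p f (u - x, - y, a)"
proof -
  note L = dual_pair_linear[OF assms(1)]
  have "minus_lo (cpl p t (u, 0, b)) (minus_up (f t) (cpl p t (- x, - y, a)))
      = minus_lo (cpl p t (u - x, - y, a)) (f t)" for t
    using assms(2) by (cases "f t"; cases "p t (- y) < a")
      (auto simp: cpl_Pair L minus_lo_def minus_up_def)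
  then show ?thesis unfolding cconj_def by simp
qed

subsection \<open>The sets Omega and K on B\<close>

lemma Eset_Bset_iff:
  assumes "dual_pair p" and "b > 0"
    and G: "cconj p g (u, v, c) = ereal G" and D: "cconj p (ind A) (x, y, a) = ereal D"
  shows "((0, 0, b), r) \<in> Eset p f g A (u, v, c) (x, y, a) \<longleftrightarrow>
    ereal (- r) \<le> phi p f g A (u, v, c) (x, y, a)"
proof -
  have "((0, 0, b), r) \<in> Eset p f g A (u, v, c) (x, y, a) \<longleftrightarrow>
      cconj p (\<lambda>t. minus_up (f t) (cpl p t (- x, - y, a))) (u, 0, b) \<le> ereal (r + (G - D))"
    unfolding Eset_def
    by (auto simp: G D image_iff epi_def intro: bexI[of _ "((u, 0, b), r + (G - D))"])
  also have "\<dots> \<longleftrightarrow> cconj p f (u - x, - y, a) \<le> ereal (r + (G - D))"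
    by (simp add: cconj_minus_cpl[OF assms(1,2)])
  also have "\<dots> \<longleftrightarrow> ereal (- r) \<le> phi p f g A (u, v, c) (x, y, a)"
    by (cases "cconj p f (u - x, - y, a)") (auto simp: phi_Pair G D minus_lo_def)
  finally show ?thesis .
qed

lemma Eset_Bset_iff_edom:
  assumes "dual_pair p" and "proper_convex g" and "A \<noteq> {}" and "b > 0"
    and "w \<in> edom (cconj p g)" and "z \<in> edom (cconj p (ind A))"
  shows "((0, 0, b), r) \<in> Eset p f g A w z \<longleftrightarrow> ereal (- r) \<le> phi p f g A w z"
proof -
  obtain u v c x y a where wz: "w = (u, v, c)" "z = (x, y, a)" by (cases w, cases z)
  obtain t0 r0 where "g t0 = ereal r0" using proper_convex_obtain_finite[OF assms(2)] .
  then obtain G where "cconj p g w = ereal G" using cconj_finite_on_edom assms(5) by metis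
  obtain s where "s \<in> A" using assms(3) by blast
  then have "ind A s = ereal 0" by (simp add: ind_def)
  then obtain D where "cconj p (ind A) z = ereal D" using cconj_finite_on_edom assms(6) by metis
  show ?thesis
    using Eset_Bset_iff[OF assms(1,4)] \<open>cconj p g w = ereal G\<close> \<open>cconj p (ind A) z = ereal D\<close>
    unfolding wz by blast
qed

lemma Omega_subset_Kset: "Omega p f g A \<subseteq> Kset p f g A"
  unfolding Omega_def Kset_def by blast

subsection \<open>Duality values\<close>

lemma phi_raise_into_Zset:
  assumes "z \<in> edom (cconj p (ind A))"
  obtains z' where "z' \<in> Zset" "z' \<in> edom (cconj p (ind A))"
    "\<And>w. phi p f g A w z \<le> phi p f g A w z'"
proof -
  obtain x y a where z: "z = (x, y, a)" by (cases z)
  have D: "cconj p (ind A) (x, y, max a 1) = cconj p (ind A) (x, y, a)"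
    using cconj_ind_raise_level[of x y a p A "max a 1"] assms z by simp
  have "phi p f g A w z \<le> phi p f g A w (x, y, max a 1)" for w
    using cconj_antimono_level[of a "max a 1" p f]
    by (cases w) (simp add: z phi_Pair D minus_lo_mono)
  moreover have "(x, y, max a 1) \<in> Zset" by (simp add: Zset_def)
  ultimately show ?thesis using that assms D z by (simp add: edom_def)
qed

lemma zero_in_edom_cconj_ind:
  assumes "dual_pair p"
  shows "(0, 0, 1) \<in> edom (cconj p (ind A))"
proof -
  have "minus_lo (cpl p t (0, 0, 1)) (ind A t) \<le> 0" for t
    by (simp add: cpl_Pair ind_def minus_lo_def dual_pair_linear[OF assms])
  then have "cconj p (ind A) (0, 0, 1) \<le> 0" unfolding cconj_def by (rule SUP_least)
  then show ?thesis by (auto simp: edom_def)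
qed

lemma phi_less_PInf:
  assumes "w \<in> edom (cconj p g)" and "f t = ereal r" and "s \<in> A"
  shows "phi p f g A w z < \<infinity>"
proof -
  obtain u v c x y a where wz: "w = (u, v, c)" "z = (x, y, a)" by (cases w, cases z)
  have "ind A s = ereal 0" using assms(3) by (simp add: ind_def)
  then show ?thesis
    unfolding wz phi_Pair
    using assms(1) cconj_neq_MInf[of f t r p, OF assms(2)] cconj_neq_MInf[of "ind A" s 0 p z]
    by (intro minus_lo_less_PInf) (auto simp: wz edom_def)
qed

lemma vDF_le_vDbarF: "vDF p f g A \<le> vDbarF p f g A"
  unfolding vDF_def vDbarF_def
  by (intro SUP_least INF_greatest) (meson INF_lower2 SUP_upper order_refl)

text \<open>A conjugate form of the affine minorants of an e-convex function: the separating
  functional of (x0, beta) from epi g is non-vertical because (x0, g x0) lies in epi g.\<close>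

lemma econvex_cconj_le:
  assumes dp: "dual_pair p" and ec: "econvex_fun p g" and nm: "\<forall>t. g t > -\<infinity>"
    and gx: "g x0 = ereal g0" and "\<beta> < g0"
  obtains u where "cconj p g (u, 0, 1) \<le> ereal (p x0 u - \<beta>)"
proof -
  note L = dual_pair_linear[OF dp]
  have "(x0, \<beta>) \<notin> epi g" using gx \<open>\<beta> < g0\<close> by (simp add: epi_def)
  then obtain y s where sep: "\<And>t r. (t, r) \<in> epi g \<Longrightarrow> p (t - x0) y + s * (r - \<beta>) < 0"
    using ec unfolding econvex_fun_def econvex_set_def by fastforce
  have "(x0, g0) \<in> epi g" using gx by (simp add: epi_def)
  from sep[OF this] have "s * (g0 - \<beta>) < 0" using L(4)[of x0 x0 y] by simp
  then have s: "s < 0" using \<open>\<beta> < g0\<close> by (simp add: mult_less_0_iff)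
  define u where "u = (- 1 / s) *\<^sub>R y"
  have pu: "p t u = p t y / - s" for t
    unfolding u_def L(5) by simp
  have "minus_lo (cpl p t (u, 0, 1)) (g t) \<le> ereal (p x0 u - \<beta>)" for t
  proof (cases "g t")
    case (real r)
    then have "p (t - x0) y + s * (r - \<beta>) < 0" by (intro sep) (simp add: epi_def)
    then have "p t y - p x0 y < - s * (r - \<beta>)" by (simp add: L(4) algebra_simps)
    then have "(p t y - p x0 y) / - s < r - \<beta>"
      using s by (subst pos_divide_less_eq) (auto simp: algebra_simps)
    moreover have "p t u - p x0 u = (p t y - p x0 y) / - s" by (simp add: pu diff_divide_distrib)
    ultimately have "p t u - r \<le> p x0 u - \<beta>" by linarith
    then show ?thesis using real by (simp add: cpl_Pair L(1) minus_lo_def)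
  qed (use nm in \<open>auto simp: cpl_Pair L(1) minus_lo_def\<close>)
  then have "cconj p g (u, 0, 1) \<le> ereal (p x0 u - \<beta>)" unfolding cconj_def by (rule SUP_least)
  then show ?thesis by (rule that)
qed

lemma edom_cconj_nonempty:
  assumes "dual_pair p" and "econvex_fun p g" and "proper_convex g"
  shows "edom (cconj p g) \<noteq> {}"
proof -
  obtain x0 g0 where gx: "g x0 = ereal g0" using proper_convex_obtain_finite[OF assms(3)] .
  have "\<forall>t. g t > -\<infinity>" using assms(3) by (auto simp: proper_convex_def)
  from econvex_cconj_le[OF assms(1,2) this gx, of "g0 - 1"] obtain u
    where "cconj p g (u, 0, 1) \<le> ereal (p x0 u - (g0 - 1))" by auto
  then have "(u, 0, 1) \<in> edom (cconj p g)" by (auto simp: edom_def)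
  then show ?thesis by blast
qed

lemma phi_le_at_feasible:
  assumes dp: "dual_pair p" and G: "cconj p g (u, v, c) = ereal G" and "x0 \<in> A"
    and fx: "f x0 = ereal f0"
  shows "phi p f g A (u, v, c) (x, y, a) \<le> ereal (G - p x0 u + f0)"
proof (cases "cconj p (ind A) (x, y, a) = \<infinity>")
  case True
  then show ?thesis by (simp add: phi_Pair minus_lo_PInf_right)
next
  case False
  note L = dual_pair_linear[OF dp]
  have "ind A x0 = ereal 0" using \<open>x0 \<in> A\<close> by (simp add: ind_def)
  from cconj_ge[of "ind A" x0 0 p "(x, y, a)", OF this]
  have "cpl p x0 (x, y, a) \<le> cconj p (ind A) (x, y, a)" by simp
  with False have "p x0 y < a" and "ereal (p x0 x) \<le> cconj p (ind A) (x, y, a)"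
    by (auto simp: cpl_Pair split: if_splits)
  with False obtain D where D: "cconj p (ind A) (x, y, a) = ereal D" and "p x0 x \<le> D"
    by (cases "cconj p (ind A) (x, y, a)") auto
  have F: "cpl p x0 (u - x, - y, a) - ereal f0 \<le> cconj p f (u - x, - y, a)"
    using cconj_ge[of f x0 f0 p, OF fx] .
  show ?thesis
  proof (cases "p x0 (- y) < a")
    case True
    then have "ereal (p x0 u - p x0 x - f0) \<le> cconj p f (u - x, - y, a)"
      using F by (simp add: cpl_Pair L)
    then show ?thesis using \<open>p x0 x \<le> D\<close>
      by (cases "cconj p f (u - x, - y, a)") (auto simp: phi_Pair G D minus_lo_def)
  next
    case False
    then have "cconj p f (u - x, - y, a) = \<infinity>" using F by (simp add: cpl_Pair)
    then show ?thesis by (simp add: phi_Pair G D minus_lo_def)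
  qed
qed

lemma vDbarF_le_vP:
  assumes dp: "dual_pair p" and pf: "proper_convex f" and pg: "proper_convex g"
    and dom: "edom f \<subseteq> edom g" and ec: "econvex_fun p g"
  shows "vDbarF p f g A \<le> vP f g A"
  unfolding vP_def
proof (rule INF_greatest)
  fix x0
  have nmg: "\<forall>t. g t > -\<infinity>" and nmf: "\<forall>t. f t > -\<infinity>"
    using pg pf by (auto simp: proper_convex_def)
  show "vDbarF p f g A \<le> minus_up (f x0) (g x0) + ind A x0"
  proof (cases "x0 \<in> A \<and> f x0 \<noteq> \<infinity>")
    case False
    then show ?thesis by (cases "g x0") (auto simp: ind_def minus_up_def)
  next
    case True
    then obtain f0 where fx: "f x0 = ereal f0" using nmf by (cases "f x0") auto
    then have "x0 \<in> edom f" by (simp add: edom_def)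
    with dom have "x0 \<in> edom g" by blast
    then obtain g0 where gx: "g x0 = ereal g0" using nmg by (cases "g x0") (auto simp: edom_def)
    have "vDbarF p f g A \<le> ereal (f0 - g0) + ereal e" if "e > 0" for e
    proof -
      obtain u where u: "cconj p g (u, 0, 1) \<le> ereal (p x0 u - (g0 - e))"
        using econvex_cconj_le[OF dp ec nmg gx, of "g0 - e"] \<open>e > 0\<close> by auto
      then have wD: "(u, 0, 1) \<in> edom (cconj p g)" by (auto simp: edom_def)
      obtain G where G: "cconj p g (u, 0, 1) = ereal G"
        using proper_convex_obtain_finite[OF pg] cconj_finite_on_edom wD by metis
      have "vDbarF p f g A \<le> (SUP z\<in>Zset. phi p f g A (u, 0, 1) z)"
        unfolding vDbarF_def using wD by (rule INF_lower)
      also have "\<dots> \<le> ereal (G - p x0 u + f0)"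
        using phi_le_at_feasible[where f = f, OF dp G conjunct1[OF True] fx] by (intro SUP_least) auto
      also have "\<dots> \<le> ereal (f0 - g0) + ereal e" using u G by simp
      finally show ?thesis .
    qed
    then show ?thesis using True fx gx
      by (simp add: minus_up_def ind_def ereal_le_epsilon2)
  qed
qed

lemma strong_DbarF_if_strong_DF:
  assumes "vDbarF p f g A \<le> vP f g A" and "strong_DF p f g A"
  shows "strong_DbarF p f g A"
proof -
  have "vDbarF p f g A = vDF p f g A"
    using assms vDF_le_vDbarF[of p f g A] by (simp add: strong_DF_def)
  then show ?thesis using assms(2) unfolding strong_DF_def strong_DbarF_def by auto
qed

lemma Kset_Bset_subset_Omega_if_strong_DF:
  assumes dp: "dual_pair p" and pg: "proper_convex g" and "A \<noteq> {}"
    and weak: "vDbarF p f g A \<le> vP f g A" and sd: "strong_DF p f g A"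
  shows "Kset p f g A \<inter> Bset \<subseteq> Omega p f g A"
proof
  note memB = Eset_Bset_iff_edom[OF dp pg \<open>A \<noteq> {}\<close>]
  obtain z0 where z0: "z0 \<in> edom (cconj p (ind A))"
    and opt: "\<And>w. w \<in> edom (cconj p g) \<Longrightarrow> vDF p f g A \<le> phi p f g A w z0"
    using sd by (auto simp: strong_DF_def)
  have eq: "vDbarF p f g A = vDF p f g A"
    using weak sd vDF_le_vDbarF[of p f g A] by (simp add: strong_DF_def)
  fix q assume q: "q \<in> Kset p f g A \<inter> Bset"
  then obtain b r where qb: "q = ((0, 0, b), r)" and "b > 0" by (auto simp: Bset_def)
  have "ereal (- r) \<le> (SUP z\<in>Zset. phi p f g A w z)" if w: "w \<in> edom (cconj p g)" for w
  proof -
    obtain z where z: "z \<in> edom (cconj p (ind A))" "q \<in> Eset p f g A w z"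
      using q w by (auto simp: Kset_def)
    obtain z' where "z' \<in> Zset" "phi p f g A w z \<le> phi p f g A w z'"
      using phi_raise_into_Zset[OF z(1)] by metis
    moreover have "ereal (- r) \<le> phi p f g A w z" using memB[OF \<open>b > 0\<close> w z(1)] z(2) qb by simp
    ultimately show ?thesis by (meson SUP_upper order_trans)
  qed
  then have "ereal (- r) \<le> vDF p f g A"
    unfolding eq[symmetric] vDbarF_def by (rule INF_greatest)
  then have "q \<in> Eset p f g A w z0" if "w \<in> edom (cconj p g)" for w
    using memB[OF \<open>b > 0\<close> that z0] opt[OF that] qb by auto
  then show "q \<in> Omega p f g A" using z0 unfolding Omega_def by blast
qed

lemma strong_DF_if_strong_DbarF:
  assumes dp: "dual_pair p" and pf: "proper_convex f" and pg: "proper_convex g" and "A \<noteq> {}"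
    and Dg: "edom (cconj p g) \<noteq> {}"
    and sdb: "strong_DbarF p f g A" and KB: "Kset p f g A \<inter> Bset \<subseteq> Omega p f g A"
  shows "strong_DF p f g A"
proof -
  note memB = Eset_Bset_iff_edom[OF dp pg \<open>A \<noteq> {}\<close>]
  have eqP: "vP f g A = vDbarF p f g A"
    and att: "\<And>w. w \<in> edom (cconj p g) \<Longrightarrow>
      \<exists>z\<in>edom (cconj p (ind A)). vDbarF p f g A \<le> phi p f g A w z"
    using sdb by (auto simp: strong_DbarF_def)
  consider (real) v where "vDbarF p f g A = ereal v" | (PInf) "vDbarF p f g A = \<infinity>"
    | (MInf) "vDbarF p f g A = -\<infinity>" by (cases "vDbarF p f g A") auto
  then show ?thesis
  proof cases
    case real
    define q where "q = (((0::'b), (0::'b), (1::real)), - v)"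
    have "q \<in> Kset p f g A"
      using att memB[of 1 _ _ "- v"] by (fastforce simp: Kset_def q_def real)
    then have "q \<in> Omega p f g A" using KB by (auto simp: Bset_def q_def)
    then obtain z0 where z0: "z0 \<in> edom (cconj p (ind A))"
      and "\<And>w. w \<in> edom (cconj p g) \<Longrightarrow> q \<in> Eset p f g A w z0"
      by (auto simp: Omega_def)
    then have opt: "ereal v \<le> phi p f g A w z0" if "w \<in> edom (cconj p g)" for w
      using memB[of 1 w z0 "- v" f] that by (simp add: q_def)
    obtain z' where "z' \<in> Zset" "\<And>w. phi p f g A w z0 \<le> phi p f g A w z'"
      using phi_raise_into_Zset[OF z0] by metis
    then have "ereal v \<le> vDF p f g A"
      unfolding vDF_def using opt by (meson INF_greatest SUP_upper2 order_trans)
    then have vDF: "vDF p f g A = ereal v" using vDF_le_vDbarF[of p f g A] real by simp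
    show ?thesis unfolding strong_DF_def vDF eqP real using z0 opt by blast
  next
    case PInf
    obtain w where w: "w \<in> edom (cconj p g)" using Dg by blast
    obtain t r where "f t = ereal r" using proper_convex_obtain_finite[OF pf] .
    moreover obtain s where "s \<in> A" using \<open>A \<noteq> {}\<close> by blast
    ultimately show ?thesis using att[OF w] PInf phi_less_PInf[OF w] by (auto simp: top_unique)
  next
    case MInf
    then have "vDF p f g A = -\<infinity>" using vDF_le_vDbarF[of p f g A] by simp
    then show ?thesis unfolding strong_DF_def using eqP MInf zero_in_edom_cconj_ind[OF dp] by auto
  qed
qed

theorem corollary5p6:
  fixes p :: "'x::real_vector \<Rightarrow> 'y::real_vector \<Rightarrow> real"
    and f g :: "'x \<Rightarrow> ereal" and A :: "'x set"
  assumes "dual_pair p"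
    and "\<exists>x::'x. x \<noteq> 0"
    and "proper_convex f" and "proper_convex g"
    and "edom f \<subseteq> edom g"
    and "A \<noteq> {}"
    and "econvex_fun p g"
  shows "strong_DF p f g A \<longleftrightarrow>
           (strong_DbarF p f g A \<and> Omega p f g A \<inter> Bset = Kset p f g A \<inter> Bset)"
proof -
  have weak: "vDbarF p f g A \<le> vP f g A"
    using vDbarF_le_vP assms(1,3,4,5,7) .
  show ?thesis
  proof
    assume "strong_DF p f g A"
    then show "strong_DbarF p f g A \<and> Omega p f g A \<inter> Bset = Kset p f g A \<inter> Bset"
      using strong_DbarF_if_strong_DF[OF weak] Omega_subset_Kset[of p f g A]
        Kset_Bset_subset_Omega_if_strong_DF[OF assms(1,4,6) weak] by blast
  next
    assume "strong_DbarF p f g A \<and> Omega p f g A \<inter> Bset = Kset p f g A \<inter> Bset"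
    then show "strong_DF p f g A"
      using strong_DF_if_strong_DbarF[OF assms(1,3,4,6) edom_cconj_nonempty[OF assms(1,7,4)]]
      by blast
  qed
qed

end
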